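(* Let $\mathcal{C}$ be a deflation-exact category and let $\mathcal{A}$ be a non-empty full subcategory of $\mathcal{C}$ satisfying axiom (A3). Let $g\colon Y\to Z$ be a morphism which has a kernel belonging to $\mathcal{A}$, and suppose there exists a deflation $f\colon X\twoheadrightarrow Y$ such that $gf$ is also a deflation. Then $g$ is a deflation.
   Context: A conflation category is an additive category with a class of kernel-cokernel pairs (closed under isomorphisms) called conflations; first map an inflation, second a deflation. A deflation-exact category is a conflation category satisfying: (R0) $1_0$ is a deflation; (R1) composites of deflations are deflations; (R2) pullbacks of deflations along arbitrary morphisms exist and are deflations. Axiom (A3) for a full subcategory $\mathcal{A}$: if $a\colon C\rightarrowtail D$ is an inflation and $b\colon C\twoheadrightarrow A$ is a deflation with $A\in\mathcal{A}$, then the pushout of $a$ along $b$ exists and in the pushout square the map $D\to P$ is a deflation and $A\to P$ is an inflation. *)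

theory Defs
  imports Main
begin

text \<open>A category with additive structure, given by explicit data: objects,
morphisms, domain, codomain, identities, composition (cmp g f = g o f),
addition of parallel morphisms and zero morphisms.\<close>

record ('o, 'm) cat =
  Obj :: "'o set"
  Mor :: "'m set"
  dom :: "'m \<Rightarrow> 'o"
  cod :: "'m \<Rightarrow> 'o"
  idm :: "'o \<Rightarrow> 'm"
  cmp :: "'m \<Rightarrow> 'm \<Rightarrow> 'm"
  add :: "'m \<Rightarrow> 'm \<Rightarrow> 'm"
  zer :: "'o \<Rightarrow> 'o \<Rightarrow> 'm"

definition hom :: "('o, 'm, 'x) cat_scheme \<Rightarrow> 'o \<Rightarrow> 'o \<Rightarrow> 'm set" where
  "hom C a b = {f \<in> Mor C. dom C f = a \<and> cod C f = b}"

definition category :: "('o, 'm, 'x) cat_scheme \<Rightarrow> bool" where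
  "category C \<longleftrightarrow>
     (\<forall>f\<in>Mor C. dom C f \<in> Obj C \<and> cod C f \<in> Obj C) \<and>
     (\<forall>a\<in>Obj C. idm C a \<in> hom C a a) \<and>
     (\<forall>f\<in>Mor C. \<forall>g\<in>Mor C. dom C g = cod C f \<longrightarrow> cmp C g f \<in> hom C (dom C f) (cod C g)) \<and>
     (\<forall>f\<in>Mor C. cmp C (idm C (cod C f)) f = f \<and> cmp C f (idm C (dom C f)) = f) \<and>
     (\<forall>f\<in>Mor C. \<forall>g\<in>Mor C. \<forall>h\<in>Mor C. dom C g = cod C f \<longrightarrow> dom C h = cod C g \<longrightarrow>
        cmp C h (cmp C g f) = cmp C (cmp C h g) f)"

definition preadditive :: "('o, 'm, 'x) cat_scheme \<Rightarrow> bool" where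
  "preadditive C \<longleftrightarrow> category C \<and>
     (\<forall>a\<in>Obj C. \<forall>b\<in>Obj C.
        zer C a b \<in> hom C a b \<and>
        (\<forall>f\<in>hom C a b. \<forall>g\<in>hom C a b. add C f g \<in> hom C a b) \<and>
        (\<forall>f\<in>hom C a b. \<forall>g\<in>hom C a b. \<forall>h\<in>hom C a b. add C (add C f g) h = add C f (add C g h)) \<and>
        (\<forall>f\<in>hom C a b. \<forall>g\<in>hom C a b. add C f g = add C g f) \<and>
        (\<forall>f\<in>hom C a b. add C f (zer C a b) = f) \<and>
        (\<forall>f\<in>hom C a b. \<exists>g\<in>hom C a b. add C f g = zer C a b)) \<and>
     (\<forall>a\<in>Obj C. \<forall>b\<in>Obj C. \<forall>c\<in>Obj C.
        (\<forall>f\<in>hom C a b. \<forall>g\<in>hom C a b. \<forall>h\<in>hom C b c.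
            cmp C h (add C f g) = add C (cmp C h f) (cmp C h g)) \<and>
        (\<forall>f\<in>hom C a b. \<forall>g\<in>hom C b c. \<forall>h\<in>hom C b c.
            cmp C (add C g h) f = add C (cmp C g f) (cmp C h f)))"

definition zero_object :: "('o, 'm, 'x) cat_scheme \<Rightarrow> 'o \<Rightarrow> bool" where
  "zero_object C z \<longleftrightarrow> z \<in> Obj C \<and>
     (\<forall>a\<in>Obj C. hom C z a = {zer C z a} \<and> hom C a z = {zer C a z})"

definition is_biproduct ::
  "('o, 'm, 'x) cat_scheme \<Rightarrow> 'o \<Rightarrow> 'o \<Rightarrow> 'o \<Rightarrow> 'm \<Rightarrow> 'm \<Rightarrow> 'm \<Rightarrow> 'm \<Rightarrow> bool" where
  "is_biproduct C a b p i1 i2 p1 p2 \<longleftrightarrow> p \<in> Obj C \<and>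
     i1 \<in> hom C a p \<and> i2 \<in> hom C b p \<and> p1 \<in> hom C p a \<and> p2 \<in> hom C p b \<and>
     cmp C p1 i1 = idm C a \<and> cmp C p2 i2 = idm C b \<and>
     cmp C p1 i2 = zer C b a \<and> cmp C p2 i1 = zer C a b \<and>
     add C (cmp C i1 p1) (cmp C i2 p2) = idm C p"

definition additive :: "('o, 'm, 'x) cat_scheme \<Rightarrow> bool" where
  "additive C \<longleftrightarrow> preadditive C \<and> (\<exists>z. zero_object C z) \<and>
     (\<forall>a\<in>Obj C. \<forall>b\<in>Obj C. \<exists>p i1 i2 p1 p2. is_biproduct C a b p i1 i2 p1 p2)"

definition iso :: "('o, 'm, 'x) cat_scheme \<Rightarrow> 'm \<Rightarrow> bool" where
  "iso C f \<longleftrightarrow> f \<in> Mor C \<and>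
     (\<exists>g\<in>hom C (cod C f) (dom C f). cmp C g f = idm C (dom C f) \<and> cmp C f g = idm C (cod C f))"

definition is_kernel :: "('o, 'm, 'x) cat_scheme \<Rightarrow> 'm \<Rightarrow> 'm \<Rightarrow> bool" where
  "is_kernel C k f \<longleftrightarrow> k \<in> Mor C \<and> f \<in> Mor C \<and> cod C k = dom C f \<and>
     cmp C f k = zer C (dom C k) (cod C f) \<and>
     (\<forall>x\<in>Mor C. cod C x = dom C f \<longrightarrow> cmp C f x = zer C (dom C x) (cod C f) \<longrightarrow>
        (\<exists>!u. u \<in> hom C (dom C x) (dom C k) \<and> cmp C k u = x))"

definition is_cokernel :: "('o, 'm, 'x) cat_scheme \<Rightarrow> 'm \<Rightarrow> 'm \<Rightarrow> bool" where
  "is_cokernel C c f \<longleftrightarrow> c \<in> Mor C \<and> f \<in> Mor C \<and> dom C c = cod C f \<and>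
     cmp C c f = zer C (dom C f) (cod C c) \<and>
     (\<forall>x\<in>Mor C. dom C x = cod C f \<longrightarrow> cmp C x f = zer C (dom C f) (cod C x) \<longrightarrow>
        (\<exists>!u. u \<in> hom C (cod C c) (cod C x) \<and> cmp C u c = x))"

definition kernel_cokernel_pair :: "('o, 'm, 'x) cat_scheme \<Rightarrow> 'm \<Rightarrow> 'm \<Rightarrow> bool" where
  "kernel_cokernel_pair C i p \<longleftrightarrow> is_kernel C i p \<and> is_cokernel C p i"

definition conflation_category :: "('o, 'm, 'x) cat_scheme \<Rightarrow> ('m \<times> 'm) set \<Rightarrow> bool" where
  "conflation_category C E \<longleftrightarrow> additive C \<and>
     (\<forall>(i, p)\<in>E. kernel_cokernel_pair C i p) \<and>
     (\<forall>i p i' p'. (i, p) \<in> E \<longrightarrow> i' \<in> Mor C \<longrightarrow> p' \<in> Mor C \<longrightarrow> cod C i' = dom C p' \<longrightarrow>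
        (\<exists>\<alpha> \<beta> \<gamma>. iso C \<alpha> \<and> iso C \<beta> \<and> iso C \<gamma> \<and>
           \<alpha> \<in> hom C (dom C i) (dom C i') \<and> \<beta> \<in> hom C (cod C i) (cod C i') \<and>
           \<gamma> \<in> hom C (cod C p) (cod C p') \<and>
           cmp C i' \<alpha> = cmp C \<beta> i \<and> cmp C p' \<beta> = cmp C \<gamma> p) \<longrightarrow>
        (i', p') \<in> E)"

definition inflation :: "('o, 'm, 'x) cat_scheme \<Rightarrow> ('m \<times> 'm) set \<Rightarrow> 'm \<Rightarrow> bool" where
  "inflation C E i \<longleftrightarrow> (\<exists>p. (i, p) \<in> E)"

definition deflation :: "('o, 'm, 'x) cat_scheme \<Rightarrow> ('m \<times> 'm) set \<Rightarrow> 'm \<Rightarrow> bool" where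
  "deflation C E p \<longleftrightarrow> (\<exists>i. (i, p) \<in> E)"

text \<open>Pullback square: p' : P -> X', t' : P -> X with p t' = t p', where
p : X -> Y and t : X' -> Y, universal among such squares.\<close>
definition is_pullback ::
  "('o, 'm, 'x) cat_scheme \<Rightarrow> 'm \<Rightarrow> 'm \<Rightarrow> 'm \<Rightarrow> 'm \<Rightarrow> bool" where
  "is_pullback C p t p' t' \<longleftrightarrow>
     p \<in> Mor C \<and> t \<in> Mor C \<and> p' \<in> Mor C \<and> t' \<in> Mor C \<and>
     cod C p = cod C t \<and> dom C p' = dom C t' \<and> cod C p' = dom C t \<and> cod C t' = dom C p \<and>
     cmp C p t' = cmp C t p' \<and>
     (\<forall>x\<in>Mor C. \<forall>y\<in>Mor C. cod C x = dom C p \<longrightarrow> cod C y = dom C t \<longrightarrow> dom C x = dom C y \<longrightarrow>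
        cmp C p x = cmp C t y \<longrightarrow>
        (\<exists>!u. u \<in> hom C (dom C x) (dom C p') \<and> cmp C t' u = x \<and> cmp C p' u = y))"

text \<open>Pushout square of a : W -> D along b : W -> A: maps b' : D -> P and
a' : A -> P with b' a = a' b, universal among such squares.\<close>
definition is_pushout ::
  "('o, 'm, 'x) cat_scheme \<Rightarrow> 'm \<Rightarrow> 'm \<Rightarrow> 'm \<Rightarrow> 'm \<Rightarrow> bool" where
  "is_pushout C a b b' a' \<longleftrightarrow>
     a \<in> Mor C \<and> b \<in> Mor C \<and> b' \<in> Mor C \<and> a' \<in> Mor C \<and>
     dom C a = dom C b \<and> cod C b' = cod C a' \<and> dom C b' = cod C a \<and> dom C a' = cod C b \<and>
     cmp C b' a = cmp C a' b \<and>
     (\<forall>x\<in>Mor C. \<forall>y\<in>Mor C. dom C x = cod C a \<longrightarrow> dom C y = cod C b \<longrightarrow> cod C x = cod C y \<longrightarrow>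
        cmp C x a = cmp C y b \<longrightarrow>
        (\<exists>!u. u \<in> hom C (cod C b') (cod C x) \<and> cmp C u b' = x \<and> cmp C u a' = y))"

definition deflation_exact :: "('o, 'm, 'x) cat_scheme \<Rightarrow> ('m \<times> 'm) set \<Rightarrow> bool" where
  "deflation_exact C E \<longleftrightarrow> conflation_category C E \<and>
     \<comment> \<open>(R0)\<close>
     (\<forall>z. zero_object C z \<longrightarrow> deflation C E (idm C z)) \<and>
     \<comment> \<open>(R1)\<close>
     (\<forall>p q. deflation C E p \<longrightarrow> deflation C E q \<longrightarrow> dom C q = cod C p \<longrightarrow>
        deflation C E (cmp C q p)) \<and>
     \<comment> \<open>(R2)\<close>
     (\<forall>p t. deflation C E p \<longrightarrow> t \<in> Mor C \<longrightarrow> cod C t = cod C p \<longrightarrow>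
        (\<exists>p' t'. is_pullback C p t p' t' \<and> deflation C E p'))"

definition axiom_A3 :: "('o, 'm, 'x) cat_scheme \<Rightarrow> ('m \<times> 'm) set \<Rightarrow> 'o set \<Rightarrow> bool" where
  "axiom_A3 C E Asub \<longleftrightarrow>
     (\<forall>a b. inflation C E a \<longrightarrow> deflation C E b \<longrightarrow> dom C a = dom C b \<longrightarrow> cod C b \<in> Asub \<longrightarrow>
        (\<exists>b' a'. is_pushout C a b b' a' \<and> deflation C E b' \<and> inflation C E a'))"

end

theory Submission
  imports Defs
begin

text \<open>
  Pull the deflation f back along the kernel k of g. The resulting square (f', k') has k' a kernel
  of gf, so k' is an inflation with cokernel gf, and f' is a deflation onto the object dom k of the
  subcategory. Since f is a cokernel and f' is epic, this pullback square is also a pushout; by (A3)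
  there is a pushout of k' along f' whose leg out of dom k is an inflation, so by uniqueness of
  pushouts k itself is an inflation. Finally g is a cokernel of k, because gf is a cokernel of k'
  and f is epic, and hence (k, g) is a conflation.
\<close>

definition monic :: "('o, 'm, 'x) cat_scheme \<Rightarrow> 'm \<Rightarrow> bool" where
  "monic C m \<longleftrightarrow> (\<forall>d u v. u \<in> hom C d (dom C m) \<longrightarrow> v \<in> hom C d (dom C m) \<longrightarrow>
     cmp C m u = cmp C m v \<longrightarrow> u = v)"

definition epic :: "('o, 'm, 'x) cat_scheme \<Rightarrow> 'm \<Rightarrow> bool" where
  "epic C e \<longleftrightarrow> (\<forall>d u v. u \<in> hom C (cod C e) d \<longrightarrow> v \<in> hom C (cod C e) d \<longrightarrow>
     cmp C u e = cmp C v e \<longrightarrow> u = v)"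

lemma ex1_unique_eq: "\<exists>!x. P x \<Longrightarrow> P a \<Longrightarrow> P b \<Longrightarrow> a = b"
  by blast

lemma monicD: "monic C m \<Longrightarrow> u \<in> hom C d (dom C m) \<Longrightarrow> v \<in> hom C d (dom C m) \<Longrightarrow>
    cmp C m u = cmp C m v \<Longrightarrow> u = v"
  unfolding monic_def by blast

lemma epicD: "epic C e \<Longrightarrow> u \<in> hom C (cod C e) d \<Longrightarrow> v \<in> hom C (cod C e) d \<Longrightarrow>
    cmp C u e = cmp C v e \<Longrightarrow> u = v"
  unfolding epic_def by blast

lemma isoI: "f \<in> hom C a b \<Longrightarrow> g \<in> hom C b a \<Longrightarrow> cmp C g f = idm C a \<Longrightarrow> cmp C f g = idm C b \<Longrightarrow>
    iso C f"
  unfolding iso_def hom_def by auto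

lemma iso_inverse:
  assumes "iso C f"
  obtains g where "g \<in> hom C (cod C f) (dom C f)"
    and "cmp C g f = idm C (dom C f)" and "cmp C f g = idm C (cod C f)"
  using assms unfolding iso_def by blast

lemma is_kernelI:
  assumes k: "k \<in> hom C K Y" and g: "g \<in> hom C Y Z" and gk: "cmp C g k = zer C K Z"
    and univ: "\<And>d x. x \<in> hom C d Y \<Longrightarrow> cmp C g x = zer C d Z \<Longrightarrow>
           \<exists>!u. u \<in> hom C d K \<and> cmp C k u = x"
  shows "is_kernel C k g"
  unfolding is_kernel_def
proof (intro conjI ballI impI)
  fix x
  assume "x \<in> Mor C" "cod C x = dom C g" "cmp C g x = zer C (dom C x) (cod C g)"
  with k g univ[of x "dom C x"] show "\<exists>!u. u \<in> hom C (dom C x) (dom C k) \<and> cmp C k u = x"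
    by (simp add: hom_def)
qed (use k g gk in \<open>simp_all add: hom_def\<close>)

lemma kernelD:
  assumes "is_kernel C k g"
  shows "k \<in> hom C (dom C k) (dom C g)" and "g \<in> hom C (dom C g) (cod C g)"
    and "cmp C g k = zer C (dom C k) (cod C g)"
  using assms unfolding is_kernel_def hom_def by simp_all

lemma kernel_lift:
  assumes "is_kernel C k g" and x: "x \<in> hom C d (dom C g)" and "cmp C g x = zer C d (cod C g)"
  shows "\<exists>!u. u \<in> hom C d (dom C k) \<and> cmp C k u = x"
proof -
  have "x \<in> Mor C" "cod C x = dom C g" "dom C x = d" using x by (simp_all add: hom_def)
  with assms show ?thesis unfolding is_kernel_def by blast
qed

lemma is_cokernelI:
  assumes c: "c \<in> hom C Y Q" and f: "f \<in> hom C X Y" and cf: "cmp C c f = zer C X Q"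
    and univ: "\<And>d x. x \<in> hom C Y d \<Longrightarrow> cmp C x f = zer C X d \<Longrightarrow>
           \<exists>!u. u \<in> hom C Q d \<and> cmp C u c = x"
  shows "is_cokernel C c f"
  unfolding is_cokernel_def
proof (intro conjI ballI impI)
  fix x
  assume "x \<in> Mor C" "dom C x = cod C f" "cmp C x f = zer C (dom C f) (cod C x)"
  with c f univ[of x "cod C x"] show "\<exists>!u. u \<in> hom C (cod C c) (cod C x) \<and> cmp C u c = x"
    by (simp add: hom_def)
qed (use c f cf in \<open>simp_all add: hom_def\<close>)

lemma cokernelD:
  assumes "is_cokernel C c f"
  shows "c \<in> hom C (cod C f) (cod C c)" and "f \<in> hom C (dom C f) (cod C f)"
    and "cmp C c f = zer C (dom C f) (cod C c)"
  using assms unfolding is_cokernel_def hom_def by simp_all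

lemma cokernel_desc:
  assumes "is_cokernel C c f" and x: "x \<in> hom C (cod C f) d" and "cmp C x f = zer C (dom C f) d"
  shows "\<exists>!u. u \<in> hom C (cod C c) d \<and> cmp C u c = x"
proof -
  have "x \<in> Mor C" "dom C x = cod C f" "cod C x = d" using x by (simp_all add: hom_def)
  with assms show ?thesis unfolding is_cokernel_def by blast
qed

lemma pullbackD:
  assumes "is_pullback C p t p' t'"
  shows "p' \<in> hom C (dom C p') (dom C t)" and "t' \<in> hom C (dom C p') (dom C p)"
    and "p \<in> hom C (dom C p) (cod C p)" and "t \<in> hom C (dom C t) (cod C p)"
    and "cmp C p t' = cmp C t p'"
  using assms unfolding is_pullback_def hom_def by simp_all

lemma pullback_lift:
  assumes "is_pullback C p t p' t'" and x: "x \<in> hom C d (dom C p)" and y: "y \<in> hom C d (dom C t)"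
    and "cmp C p x = cmp C t y"
  shows "\<exists>!u. u \<in> hom C d (dom C p') \<and> cmp C t' u = x \<and> cmp C p' u = y"
proof -
  have "x \<in> Mor C" "cod C x = dom C p" "dom C x = d" "y \<in> Mor C" "cod C y = dom C t" "dom C y = d"
    using x y by (simp_all add: hom_def)
  with assms show ?thesis unfolding is_pullback_def by (metis (no_types, lifting))
qed

lemma is_pushoutI:
  assumes a: "a \<in> hom C W X" and b: "b \<in> hom C W K" and b': "b' \<in> hom C X P" and a': "a' \<in> hom C K P"
    and sq: "cmp C b' a = cmp C a' b"
    and univ: "\<And>d x y. x \<in> hom C X d \<Longrightarrow> y \<in> hom C K d \<Longrightarrow> cmp C x a = cmp C y b \<Longrightarrow>
           \<exists>!u. u \<in> hom C P d \<and> cmp C u b' = x \<and> cmp C u a' = y"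
  shows "is_pushout C a b b' a'"
  unfolding is_pushout_def
proof (intro conjI ballI impI)
  fix x y
  assume "x \<in> Mor C" "y \<in> Mor C" "dom C x = cod C a" "dom C y = cod C b" "cod C x = cod C y"
    and "cmp C x a = cmp C y b"
  with a b b' univ[of x "cod C x" y]
  show "\<exists>!u. u \<in> hom C (cod C b') (cod C x) \<and> cmp C u b' = x \<and> cmp C u a' = y"
    by (simp add: hom_def)
qed (use a b b' a' sq in \<open>simp_all add: hom_def\<close>)

lemma pushoutD:
  assumes "is_pushout C a b b' a'"
  shows "b' \<in> hom C (cod C a) (cod C b')" and "a' \<in> hom C (cod C b) (cod C b')"
    and "cmp C b' a = cmp C a' b"
  using assms unfolding is_pushout_def hom_def by simp_all

lemma pushout_desc:
  assumes "is_pushout C a b b' a'" and x: "x \<in> hom C (cod C a) d" and y: "y \<in> hom C (cod C b) d"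
    and "cmp C x a = cmp C y b"
  shows "\<exists>!u. u \<in> hom C (cod C b') d \<and> cmp C u b' = x \<and> cmp C u a' = y"
proof -
  have "x \<in> Mor C" "dom C x = cod C a" "cod C x = d" "y \<in> Mor C" "dom C y = cod C b" "cod C y = d"
    using x y by (simp_all add: hom_def)
  with assms show ?thesis unfolding is_pushout_def by (metis (no_types, lifting))
qed

locale preadditive_category =
  fixes C :: "('o, 'm) cat"
  assumes preadditive: "preadditive C"
begin

lemma category: "category C"
  using preadditive by (simp add: preadditive_def)

lemma hom_objects: "f \<in> hom C a b \<Longrightarrow> a \<in> Obj C \<and> b \<in> Obj C"
  using category unfolding category_def hom_def by auto

lemma id_hom: "a \<in> Obj C \<Longrightarrow> idm C a \<in> hom C a a"
  using category unfolding category_def by blast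

lemma comp_hom: "f \<in> hom C a b \<Longrightarrow> g \<in> hom C b c \<Longrightarrow> cmp C g f \<in> hom C a c"
  using category unfolding category_def hom_def by auto

lemma comp_assoc: "f \<in> hom C a b \<Longrightarrow> g \<in> hom C b c \<Longrightarrow> h \<in> hom C c d \<Longrightarrow>
    cmp C h (cmp C g f) = cmp C (cmp C h g) f"
  using category unfolding category_def hom_def by auto

lemma id_left: "f \<in> hom C a b \<Longrightarrow> cmp C (idm C b) f = f"
  using category unfolding category_def hom_def by auto

lemma id_right: "f \<in> hom C a b \<Longrightarrow> cmp C f (idm C a) = f"
  using category unfolding category_def hom_def by auto

lemma iso_id: "a \<in> Obj C \<Longrightarrow> iso C (idm C a)"
  using isoI id_hom id_left by metis

lemma zero_hom: "a \<in> Obj C \<Longrightarrow> b \<in> Obj C \<Longrightarrow> zer C a b \<in> hom C a b"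
  using preadditive unfolding preadditive_def by blast

lemma idempotent_add_eq_zero:
  assumes x: "x \<in> hom C a b" and xx: "add C x x = x"
  shows "x = zer C a b"
proof -
  have a: "a \<in> Obj C" and b: "b \<in> Obj C" using hom_objects[OF x] by auto
  have assoc: "\<forall>f\<in>hom C a b. \<forall>g\<in>hom C a b. \<forall>h\<in>hom C a b. add C (add C f g) h = add C f (add C g h)"
    and unit: "\<forall>f\<in>hom C a b. add C f (zer C a b) = f"
    and inverse: "\<forall>f\<in>hom C a b. \<exists>g\<in>hom C a b. add C f g = zer C a b"
    using preadditive a b unfolding preadditive_def by blast+
  obtain y where y: "y \<in> hom C a b" "add C x y = zer C a b" using inverse x by blast
  have "zer C a b = add C (add C x x) y" using xx y by simp
  also have "\<dots> = x" using assoc unit x y by simp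
  finally show ?thesis by simp
qed

lemma zero_comp:
  assumes f: "f \<in> hom C a b" and c: "c \<in> Obj C"
  shows "cmp C (zer C b c) f = zer C a c"
proof (rule idempotent_add_eq_zero)
  have b: "b \<in> Obj C" using hom_objects[OF f] by blast
  then have z: "zer C b c \<in> hom C b c" by (simp add: zero_hom c)
  then show "cmp C (zer C b c) f \<in> hom C a c" by (rule comp_hom[OF f])
  have "add C (zer C b c) (zer C b c) = zer C b c"
    using preadditive z b c unfolding preadditive_def by blast
  then show "add C (cmp C (zer C b c) f) (cmp C (zer C b c) f) = cmp C (zer C b c) f"
    using preadditive f z hom_objects[OF f] c unfolding preadditive_def by metis
qed

lemma comp_zero:
  assumes f: "f \<in> hom C b c" and a: "a \<in> Obj C"
  shows "cmp C f (zer C a b) = zer C a c"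
proof (rule idempotent_add_eq_zero)
  have b: "b \<in> Obj C" using hom_objects[OF f] by blast
  then have z: "zer C a b \<in> hom C a b" by (simp add: zero_hom a)
  then show "cmp C f (zer C a b) \<in> hom C a c" using comp_hom f by blast
  have "add C (zer C a b) (zer C a b) = zer C a b"
    using preadditive z a b unfolding preadditive_def by blast
  then show "add C (cmp C f (zer C a b)) (cmp C f (zer C a b)) = cmp C f (zer C a b)"
    using preadditive f z hom_objects[OF f] a unfolding preadditive_def by metis
qed

lemma kernel_monic:
  assumes k: "is_kernel C k g"
  shows "monic C k"
  unfolding monic_def
proof (intro allI impI)
  fix d u v
  assume u: "u \<in> hom C d (dom C k)" and v: "v \<in> hom C d (dom C k)" and eq: "cmp C k u = cmp C k v"
  have ku: "cmp C k u \<in> hom C d (dom C g)" using comp_hom[OF u kernelD(1)[OF k]] .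
  have "cmp C g (cmp C k u) = cmp C (cmp C g k) u" using comp_assoc[OF u kernelD(1,2)[OF k]] .
  also have "\<dots> = zer C d (cod C g)"
    using kernelD(3)[OF k] zero_comp[OF u] hom_objects[OF kernelD(2)[OF k]] by simp
  finally have "\<exists>!w. w \<in> hom C d (dom C k) \<and> cmp C k w = cmp C k u"
    by (rule kernel_lift[OF k ku])
  then show "u = v" by (rule ex1_unique_eq) (simp_all add: u v eq)
qed

lemma cokernel_epic:
  assumes c: "is_cokernel C c f"
  shows "epic C c"
  unfolding epic_def
proof (intro allI impI)
  fix d u v
  assume u: "u \<in> hom C (cod C c) d" and v: "v \<in> hom C (cod C c) d" and eq: "cmp C u c = cmp C v c"
  have uc: "cmp C u c \<in> hom C (cod C f) d" using comp_hom[OF cokernelD(1)[OF c] u] .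
  have "cmp C (cmp C u c) f = cmp C u (cmp C c f)" using comp_assoc[OF cokernelD(2,1)[OF c] u] by simp
  also have "\<dots> = zer C (dom C f) d"
    using cokernelD(3)[OF c] comp_zero[OF u] hom_objects[OF cokernelD(2)[OF c]] by simp
  finally have "\<exists>!w. w \<in> hom C (cod C c) d \<and> cmp C w c = cmp C u c"
    by (rule cokernel_desc[OF c uc])
  then show "u = v" by (rule ex1_unique_eq) (simp_all add: u v eq)
qed

lemma kernel_unique:
  assumes k: "is_kernel C k g" and k': "is_kernel C k' g"
  shows "\<exists>\<alpha> \<in> hom C (dom C k) (dom C k'). iso C \<alpha> \<and> cmp C k' \<alpha> = k"
proof -
  obtain \<alpha> where \<alpha>: "\<alpha> \<in> hom C (dom C k) (dom C k')" "cmp C k' \<alpha> = k"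
    using kernel_lift[OF k' kernelD(1,3)[OF k]] by blast
  obtain \<beta> where \<beta>: "\<beta> \<in> hom C (dom C k') (dom C k)" "cmp C k \<beta> = k'"
    using kernel_lift[OF k kernelD(1,3)[OF k']] by blast
  have dom_k: "dom C k \<in> Obj C" and dom_k': "dom C k' \<in> Obj C" using hom_objects[OF \<alpha>(1)] by auto
  have "cmp C k (cmp C \<beta> \<alpha>) = cmp C k (idm C (dom C k))"
    using comp_assoc[OF \<alpha>(1) \<beta>(1) kernelD(1)[OF k]] \<alpha>(2) \<beta>(2) id_right[OF kernelD(1)[OF k]] by simp
  then have \<beta>\<alpha>: "cmp C \<beta> \<alpha> = idm C (dom C k)"
    by (rule monicD[OF kernel_monic[OF k] comp_hom[OF \<alpha>(1) \<beta>(1)] id_hom[OF dom_k]])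
  have "cmp C k' (cmp C \<alpha> \<beta>) = cmp C k' (idm C (dom C k'))"
    using comp_assoc[OF \<beta>(1) \<alpha>(1) kernelD(1)[OF k']] \<alpha>(2) \<beta>(2) id_right[OF kernelD(1)[OF k']] by simp
  then have \<alpha>\<beta>: "cmp C \<alpha> \<beta> = idm C (dom C k')"
    by (rule monicD[OF kernel_monic[OF k'] comp_hom[OF \<beta>(1) \<alpha>(1)] id_hom[OF dom_k']])
  show ?thesis using isoI[OF \<alpha>(1) \<beta>(1) \<beta>\<alpha> \<alpha>\<beta>] \<alpha> by blast
qed

lemma cokernel_unique:
  assumes c: "is_cokernel C c f" and c': "is_cokernel C c' f"
  shows "\<exists>\<gamma> \<in> hom C (cod C c) (cod C c'). iso C \<gamma> \<and> cmp C \<gamma> c = c'"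
proof -
  obtain \<gamma> where \<gamma>: "\<gamma> \<in> hom C (cod C c) (cod C c')" "cmp C \<gamma> c = c'"
    using cokernel_desc[OF c cokernelD(1,3)[OF c']] by blast
  obtain \<delta> where \<delta>: "\<delta> \<in> hom C (cod C c') (cod C c)" "cmp C \<delta> c' = c"
    using cokernel_desc[OF c' cokernelD(1,3)[OF c]] by blast
  have cod_c: "cod C c \<in> Obj C" and cod_c': "cod C c' \<in> Obj C" using hom_objects[OF \<gamma>(1)] by auto
  have "cmp C (cmp C \<delta> \<gamma>) c = cmp C (idm C (cod C c)) c"
    using comp_assoc[OF cokernelD(1)[OF c] \<gamma>(1) \<delta>(1)] \<gamma>(2) \<delta>(2) id_left[OF cokernelD(1)[OF c]] by simp
  then have \<delta>\<gamma>: "cmp C \<delta> \<gamma> = idm C (cod C c)"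
    by (rule epicD[OF cokernel_epic[OF c] comp_hom[OF \<gamma>(1) \<delta>(1)] id_hom[OF cod_c]])
  have "cmp C (cmp C \<gamma> \<delta>) c' = cmp C (idm C (cod C c')) c'"
    using comp_assoc[OF cokernelD(1)[OF c'] \<delta>(1) \<gamma>(1)] \<gamma>(2) \<delta>(2) id_left[OF cokernelD(1)[OF c']] by simp
  then have \<gamma>\<delta>: "cmp C \<gamma> \<delta> = idm C (cod C c')"
    by (rule epicD[OF cokernel_epic[OF c'] comp_hom[OF \<delta>(1) \<gamma>(1)] id_hom[OF cod_c']])
  show ?thesis using isoI[OF \<gamma>(1) \<delta>(1) \<delta>\<gamma> \<gamma>\<delta>] \<gamma> by blast
qed

lemma pushout_endo_eq_id:
  assumes po: "is_pushout C a b b' a'" and u: "u \<in> hom C (cod C b') (cod C b')"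
    and "cmp C u b' = b'" and "cmp C u a' = a'"
  shows "u = idm C (cod C b')"
proof (rule ex1_unique_eq[OF pushout_desc[OF po pushoutD[OF po]]])
  show "u \<in> hom C (cod C b') (cod C b') \<and> cmp C u b' = b' \<and> cmp C u a' = a'"
    using assms by simp
  show "idm C (cod C b') \<in> hom C (cod C b') (cod C b') \<and> cmp C (idm C (cod C b')) b' = b' \<and>
      cmp C (idm C (cod C b')) a' = a'"
    using id_hom hom_objects[OF u] id_left pushoutD(1,2)[OF po] by simp
qed

lemma pushout_unique:
  assumes po1: "is_pushout C a b b1 a1" and po2: "is_pushout C a b b2 a2"
  shows "\<exists>\<phi> \<in> hom C (cod C b1) (cod C b2). iso C \<phi> \<and> cmp C \<phi> b1 = b2 \<and> cmp C \<phi> a1 = a2"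
proof -
  note sq1 = pushoutD[OF po1] and sq2 = pushoutD[OF po2]
  obtain \<phi> where \<phi>: "\<phi> \<in> hom C (cod C b1) (cod C b2)" "cmp C \<phi> b1 = b2" "cmp C \<phi> a1 = a2"
    using pushout_desc[OF po1 sq2] by blast
  obtain \<psi> where \<psi>: "\<psi> \<in> hom C (cod C b2) (cod C b1)" "cmp C \<psi> b2 = b1" "cmp C \<psi> a2 = a1"
    using pushout_desc[OF po2 sq1] by blast
  have \<psi>\<phi>: "cmp C \<psi> \<phi> = idm C (cod C b1)"
    using pushout_endo_eq_id[OF po1 comp_hom[OF \<phi>(1) \<psi>(1)]]
      comp_assoc[OF sq1(1) \<phi>(1) \<psi>(1)] comp_assoc[OF sq1(2) \<phi>(1) \<psi>(1)] \<phi> \<psi> by simp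
  have \<phi>\<psi>: "cmp C \<phi> \<psi> = idm C (cod C b2)"
    using pushout_endo_eq_id[OF po2 comp_hom[OF \<psi>(1) \<phi>(1)]]
      comp_assoc[OF sq2(1) \<psi>(1) \<phi>(1)] comp_assoc[OF sq2(2) \<psi>(1) \<phi>(1)] \<phi> \<psi> by simp
  show ?thesis using isoI[OF \<phi>(1) \<psi>(1) \<psi>\<phi> \<phi>\<psi>] \<phi> by blast
qed

lemma kernel_of_pullback_along_kernel:
  assumes k: "is_kernel C k g" and pb: "is_pullback C f k f' k'"
  shows "is_kernel C k' (cmp C g f)"
proof -
  let ?X = "dom C f" and ?Y = "dom C g" and ?Z = "cod C g" and ?K = "dom C k" and ?P = "dom C f'"
  have "cod C f = ?Y" using pullbackD(4)[OF pb] kernelD(1)[OF k] by (simp add: hom_def)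
  then have f: "f \<in> hom C ?X ?Y" and f': "f' \<in> hom C ?P ?K" and k': "k' \<in> hom C ?P ?X"
    and sq: "cmp C f k' = cmp C k f'"
    using pullbackD[OF pb] by simp_all
  note k_hom = kernelD(1)[OF k] and g = kernelD(2)[OF k]
  have gf: "cmp C g f \<in> hom C ?X ?Z" using comp_hom[OF f g] .
  show ?thesis
  proof (rule is_kernelI[OF k' gf])
    have "cmp C (cmp C g f) k' = cmp C (cmp C g k) f'"
      using comp_assoc[OF k' f g] comp_assoc[OF f' k_hom g] sq by simp
    also have "\<dots> = zer C ?P ?Z"
      using kernelD(3)[OF k] zero_comp[OF f'] hom_objects[OF g] by simp
    finally show "cmp C (cmp C g f) k' = zer C ?P ?Z" .
  next
    fix d x
    assume x: "x \<in> hom C d ?X" and gfx: "cmp C (cmp C g f) x = zer C d ?Z"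
    have fx: "cmp C f x \<in> hom C d ?Y" using comp_hom[OF x f] .
    have "cmp C g (cmp C f x) = zer C d ?Z" using comp_assoc[OF x f g] gfx by simp
    then obtain h where h: "h \<in> hom C d ?K" "cmp C k h = cmp C f x"
      using kernel_lift[OF k fx] by blast
    have lift: "\<exists>!u. u \<in> hom C d ?P \<and> cmp C k' u = x \<and> cmp C f' u = h"
      using pullback_lift[OF pb x h(1) h(2)[symmetric]] .
    then obtain u where u: "u \<in> hom C d ?P" "cmp C k' u = x" "cmp C f' u = h" by blast
    show "\<exists>!u. u \<in> hom C d ?P \<and> cmp C k' u = x"
    proof (rule ex1I[of _ u])
      fix v
      assume v: "v \<in> hom C d ?P \<and> cmp C k' v = x"
      have "cmp C k (cmp C f' v) = cmp C k h"
        using comp_assoc[OF _ f' k_hom, of v d] comp_assoc[OF _ k' f, of v d] v sq h(2) by simp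
      moreover have "cmp C f' v \<in> hom C d ?K" using comp_hom[OF _ f'] v by simp
      ultimately have "cmp C f' v = h" using monicD[OF kernel_monic[OF k] _ h(1)] by blast
      then show "v = u" using ex1_unique_eq[OF lift] u v by blast
    qed (use u in simp)
  qed
qed

lemma pushout_of_pullback_of_cokernel:
  assumes f: "is_cokernel C f j" and pb: "is_pullback C f k f' k'" and f'_epic: "epic C f'"
  shows "is_pushout C k' f' f k"
proof -
  let ?X = "dom C f" and ?Y = "cod C f" and ?K = "dom C k" and ?P = "dom C f'" and ?V = "dom C j"
  note f_hom = pullbackD(3)[OF pb] and k = pullbackD(4)[OF pb]
    and f' = pullbackD(1)[OF pb] and k' = pullbackD(2)[OF pb] and sq = pullbackD(5)[OF pb]
  have "cod C j = ?X" using cokernelD(1)[OF f] by (simp add: hom_def)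
  then have j: "j \<in> hom C ?V ?X" using cokernelD(2)[OF f] by simp
  have V: "?V \<in> Obj C" and K: "?K \<in> Obj C" using hom_objects[OF j] hom_objects[OF k] by auto
  \<comment> \<open>The kernel j of f lifts to the pullback with zero component in K; hence every x with
    x k' = y f' kills j and factors through f.\<close>
  have "cmp C f j = cmp C k (zer C ?V ?K)"
    using cokernelD(3)[OF f] comp_zero[OF k V] by simp
  then obtain w where w: "w \<in> hom C ?V ?P" "cmp C k' w = j" "cmp C f' w = zer C ?V ?K"
    using pullback_lift[OF pb j zero_hom[OF V K]] by blast
  show ?thesis
  proof (rule is_pushoutI[OF k' f' f_hom k sq])
    fix d x y
    assume x: "x \<in> hom C ?X d" and y: "y \<in> hom C ?K d" and xy: "cmp C x k' = cmp C y f'"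
    have "cmp C x j = cmp C y (cmp C f' w)"
      using comp_assoc[OF w(1) k' x] comp_assoc[OF w(1) f' y] w(2) xy by simp
    also have "\<dots> = zer C ?V d" using w(3) comp_zero[OF y V] by simp
    finally have xj: "cmp C x j = zer C ?V d" .
    have desc: "\<exists>!u. u \<in> hom C ?Y d \<and> cmp C u f = x"
      using cokernel_desc[OF f _ xj] x \<open>cod C j = ?X\<close> by simp
    then obtain u where u: "u \<in> hom C ?Y d" "cmp C u f = x" by blast
    have "cmp C (cmp C u k) f' = cmp C y f'"
      using comp_assoc[OF f' k u(1)] comp_assoc[OF k' f_hom u(1)] sq u(2) xy by simp
    then have uk: "cmp C u k = y"
      using epicD[OF f'_epic, of "cmp C u k" d y] comp_hom[OF k u(1)] y f' by (simp add: hom_def)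
    show "\<exists>!u. u \<in> hom C ?Y d \<and> cmp C u f = x \<and> cmp C u k = y"
      using desc u uk by (auto intro: ex1I[of _ u])
  qed
qed

lemma cokernel_cancel_epic:
  assumes f: "f \<in> hom C X Y" and f_epic: "epic C f" and g: "g \<in> hom C Y Z"
    and k: "k \<in> hom C K Y" and gk: "cmp C g k = zer C K Z"
    and k': "k' \<in> hom C P X" and f': "f' \<in> hom C P K" and sq: "cmp C f k' = cmp C k f'"
    and gf: "is_cokernel C (cmp C g f) k'"
  shows "is_cokernel C g k"
proof (rule is_cokernelI[OF g k gk])
  fix d x
  assume x: "x \<in> hom C Y d" and xk: "cmp C x k = zer C K d"
  have k'_ends: "dom C k' = P" "cod C k' = X" using k' unfolding hom_def by blast+
  have gf_cod: "cod C (cmp C g f) = Z" using comp_hom[OF f g] by (simp add: hom_def)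
  have f_cod: "cod C f = Y" using f by (simp add: hom_def)
  have d: "d \<in> Obj C" using hom_objects[OF x] by blast
  have "cmp C (cmp C x f) k' = cmp C (cmp C x k) f'"
    using comp_assoc[OF k' f x] comp_assoc[OF f' k x] sq by simp
  also have "\<dots> = zer C P d" using xk zero_comp[OF f' d] by simp
  finally have "cmp C (cmp C x f) k' = zer C P d" .
  then have desc: "\<exists>!u. u \<in> hom C Z d \<and> cmp C u (cmp C g f) = cmp C x f"
    using cokernel_desc[OF gf, of "cmp C x f" d] comp_hom[OF f x] k'_ends gf_cod by simp
  then obtain u where u: "u \<in> hom C Z d" "cmp C u (cmp C g f) = cmp C x f" by blast
  have ug_hom: "cmp C u g \<in> hom C (cod C f) d" using comp_hom[OF g u(1)] f_cod by simp
  have x_hom: "x \<in> hom C (cod C f) d" using x f_cod by simp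
  have "cmp C (cmp C u g) f = cmp C x f" using comp_assoc[OF f g u(1)] u(2) by simp
  then have ug: "cmp C u g = x" by (rule epicD[OF f_epic ug_hom x_hom])
  have unique: "v = u" if v: "v \<in> hom C Z d" "cmp C v g = x" for v
  proof (rule ex1_unique_eq[OF desc])
    show "v \<in> hom C Z d \<and> cmp C v (cmp C g f) = cmp C x f"
      using comp_assoc[OF f g v(1)] v by simp
  qed (use u in simp)
  show "\<exists>!u. u \<in> hom C Z d \<and> cmp C u g = x"
    using u(1) ug by (intro ex1I[of _ u]) (auto intro: unique)
qed

end

locale conflation_cat =
  fixes C :: "('o, 'm) cat" and E :: "('m \<times> 'm) set"
  assumes conflation: "conflation_category C E"

sublocale conflation_cat \<subseteq> preadditive_category
  using conflation by unfold_locales (simp add: conflation_category_def additive_def)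

context conflation_cat
begin

lemma conflation_kernel_cokernel: "(i, p) \<in> E \<Longrightarrow> is_kernel C i p \<and> is_cokernel C p i"
  using conflation unfolding conflation_category_def kernel_cokernel_pair_def by auto

lemma deflation_epic: "deflation C E p \<Longrightarrow> epic C p"
  using conflation_kernel_cokernel cokernel_epic unfolding deflation_def by blast

lemma conflation_iso_closed:
  assumes ip: "(i, p) \<in> E" and i': "i' \<in> hom C A' B'" and p': "p' \<in> hom C B' C'"
    and "\<alpha> \<in> hom C (dom C i) A'" and "\<beta> \<in> hom C (cod C i) B'" and "\<gamma> \<in> hom C (cod C p) C'"
    and "iso C \<alpha>" and "iso C \<beta>" and "iso C \<gamma>"
    and "cmp C i' \<alpha> = cmp C \<beta> i" and "cmp C p' \<beta> = cmp C \<gamma> p"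
  shows "(i', p') \<in> E"
proof -
  have closed: "\<forall>i p i' p'. (i, p) \<in> E \<longrightarrow> i' \<in> Mor C \<longrightarrow> p' \<in> Mor C \<longrightarrow> cod C i' = dom C p' \<longrightarrow>
        (\<exists>\<alpha> \<beta> \<gamma>. iso C \<alpha> \<and> iso C \<beta> \<and> iso C \<gamma> \<and>
           \<alpha> \<in> hom C (dom C i) (dom C i') \<and> \<beta> \<in> hom C (cod C i) (cod C i') \<and>
           \<gamma> \<in> hom C (cod C p) (cod C p') \<and>
           cmp C i' \<alpha> = cmp C \<beta> i \<and> cmp C p' \<beta> = cmp C \<gamma> p) \<longrightarrow>
        (i', p') \<in> E"
    using conflation unfolding conflation_category_def by (elim conjE)
  have ends: "i' \<in> Mor C" "p' \<in> Mor C" "dom C i' = A'" "cod C i' = B'" "dom C p' = B'" "cod C p' = C'"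
    using i' p' by (simp_all add: hom_def)
  show ?thesis
  proof (rule closed[rule_format, OF ip ends(1,2)])
    show "cod C i' = dom C p'" using ends by simp
    show "\<exists>\<alpha> \<beta> \<gamma>. iso C \<alpha> \<and> iso C \<beta> \<and> iso C \<gamma> \<and>
        \<alpha> \<in> hom C (dom C i) (dom C i') \<and> \<beta> \<in> hom C (cod C i) (cod C i') \<and>
        \<gamma> \<in> hom C (cod C p) (cod C p') \<and> cmp C i' \<alpha> = cmp C \<beta> i \<and> cmp C p' \<beta> = cmp C \<gamma> p"
      unfolding ends(3,4,6) using assms(4-) by blast
  qed
qed

lemma conflation_replace_kernel:
  assumes ip: "(i, p) \<in> E" and i': "is_kernel C i' p"
  shows "(i', p) \<in> E"
proof -
  have i: "is_kernel C i p" using conflation_kernel_cokernel[OF ip] by blast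
  obtain \<alpha> where \<alpha>: "\<alpha> \<in> hom C (dom C i) (dom C i')" "iso C \<alpha>" "cmp C i' \<alpha> = i"
    using kernel_unique[OF i i'] by blast
  note p = kernelD(2)[OF i]
  have Y: "dom C p \<in> Obj C" and Z: "cod C p \<in> Obj C" using hom_objects[OF p] by auto
  have "cod C i = dom C p" using kernelD(1)[OF i] by (simp add: hom_def)
  then have \<beta>: "idm C (dom C p) \<in> hom C (cod C i) (dom C p)" using id_hom[OF Y] by simp
  show ?thesis
    using conflation_iso_closed[OF ip kernelD(1)[OF i'] p \<alpha>(1) \<beta> id_hom[OF Z]
        \<alpha>(2) iso_id[OF Y] iso_id[OF Z]]
      \<alpha>(3) id_left[OF kernelD(1)[OF i]] id_left[OF p] id_right[OF p]
    by simp
qed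

lemma conflation_replace_cokernel:
  assumes ip: "(i, p) \<in> E" and p': "is_cokernel C p' i"
  shows "(i, p') \<in> E"
proof -
  have p: "is_cokernel C p i" using conflation_kernel_cokernel[OF ip] by blast
  obtain \<gamma> where \<gamma>: "\<gamma> \<in> hom C (cod C p) (cod C p')" "iso C \<gamma>" "cmp C \<gamma> p = p'"
    using cokernel_unique[OF p p'] by blast
  have X: "dom C i \<in> Obj C" and Y: "cod C i \<in> Obj C"
    using hom_objects[OF cokernelD(2)[OF p]] by auto
  show ?thesis
    using conflation_iso_closed[OF ip cokernelD(2)[OF p] cokernelD(1)[OF p']
        id_hom[OF X] id_hom[OF Y] \<gamma>(1) iso_id[OF X] iso_id[OF Y] \<gamma>(2)]
      \<gamma>(3) id_left[OF cokernelD(2)[OF p]] id_right[OF cokernelD(2)[OF p]]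
      id_right[OF cokernelD(1)[OF p']]
    by simp
qed

lemma inflation_comp_iso:
  assumes i: "inflation C E i" and \<phi>: "\<phi> \<in> hom C (cod C i) Y" and "iso C \<phi>"
  shows "inflation C E (cmp C \<phi> i)"
proof -
  obtain p where ip: "(i, p) \<in> E" using i unfolding inflation_def by blast
  have i_hom: "i \<in> hom C (dom C i) (cod C i)" and p: "p \<in> hom C (cod C i) (cod C p)"
    using kernelD(1,2)[OF conflation_kernel_cokernel[OF ip, THEN conjunct1]] by (simp_all add: hom_def)
  obtain \<psi> where \<psi>: "\<psi> \<in> hom C Y (cod C i)" "cmp C \<psi> \<phi> = idm C (cod C i)"
    using iso_inverse[OF \<open>iso C \<phi>\<close>] \<phi> by (simp add: hom_def) blast
  have X: "dom C i \<in> Obj C" and Z: "cod C p \<in> Obj C"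
    using hom_objects[OF i_hom] hom_objects[OF p] by auto
  have "cmp C (cmp C p \<psi>) \<phi> = cmp C (idm C (cod C p)) p"
    using comp_assoc[OF \<phi> \<psi>(1) p] \<psi>(2) id_left[OF p] id_right[OF p] by simp
  then have "(cmp C \<phi> i, cmp C p \<psi>) \<in> E"
    using conflation_iso_closed[OF ip comp_hom[OF i_hom \<phi>] comp_hom[OF \<psi>(1) p]
        id_hom[OF X] \<phi> id_hom[OF Z] iso_id[OF X] \<open>iso C \<phi>\<close> iso_id[OF Z]]
      id_right[OF comp_hom[OF i_hom \<phi>]] by simp
  then show ?thesis unfolding inflation_def by blast
qed

end

theorem mainTheorem5:
  fixes C :: "('o, 'm) cat" and E :: "('m \<times> 'm) set" and Asub :: "'o set"
    and f g :: 'm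
  assumes "deflation_exact C E"
    and "Asub \<subseteq> Obj C" and "Asub \<noteq> {}"
    and "axiom_A3 C E Asub"
    and "g \<in> Mor C"
    and "\<exists>k. is_kernel C k g \<and> dom C k \<in> Asub"
    and "deflation C E f" and "cod C f = dom C g"
    and "deflation C E (cmp C g f)"
  shows "deflation C E g"
proof -
  interpret conflation_cat C E
    using assms(1) by unfold_locales (simp add: deflation_exact_def)
  obtain k where k: "is_kernel C k g" and K: "dom C k \<in> Asub" using assms(6) by blast
  have "k \<in> Mor C" "cod C k = cod C f" using kernelD(1)[OF k] assms(8) by (simp_all add: hom_def)
  then obtain f' k' where pb: "is_pullback C f k f' k'" and f': "deflation C E f'"
    using assms(1,7) unfolding deflation_exact_def by blast
  obtain i where "(i, cmp C g f) \<in> E" using assms(9) unfolding deflation_def by blast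
  then have k'_gf: "(k', cmp C g f) \<in> E"
    using conflation_replace_kernel kernel_of_pullback_along_kernel[OF k pb] by blast
  have "dom C k' = dom C f'" "cod C f' \<in> Asub" using pullbackD(1,2)[OF pb] K by (simp_all add: hom_def)
  then obtain h' i' where po: "is_pushout C k' f' h' i'" and i': "inflation C E i'"
    using assms(4) f' k'_gf unfolding axiom_A3_def inflation_def by blast
  obtain j where "(j, f) \<in> E" using assms(7) unfolding deflation_def by blast
  then have "is_pushout C k' f' f k"
    using pushout_of_pullback_of_cokernel[OF _ pb deflation_epic[OF f']] conflation_kernel_cokernel
    by blast
  then obtain \<phi> where "\<phi> \<in> hom C (cod C i') (cod C f)" "iso C \<phi>" "cmp C \<phi> i' = k"
    using pushout_unique[OF po] pushoutD(2)[OF po] by (auto simp: hom_def)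
  then obtain p where kp: "(k, p) \<in> E" using inflation_comp_iso[OF i'] unfolding inflation_def by metis
  have "f \<in> hom C (dom C f) (dom C g)" using pullbackD(3)[OF pb] assms(8) by simp
  then have "is_cokernel C g k"
    using cokernel_cancel_epic[OF _ deflation_epic[OF assms(7)] kernelD(2,1,3)[OF k]
        pullbackD(2,1,5)[OF pb]] conflation_kernel_cokernel[OF k'_gf]
    by blast
  then show ?thesis using conflation_replace_cokernel[OF kp] unfolding deflation_def by blast
qed

end
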